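(* Let $d\ge1$, $L\ge1$, and let $\ell:[0,1]^2\to\mathbb{R}_{\ge0}$ be continuous with $\ell(y,y)=0$ for all $y\in[0,1]$. For every sequence $(x_t)_{t\ge1}\subseteq[-1,1]^d$ and every $f^\star\in\mathcal{H}_L$ with $y_t=f^\star(x_t)$, the (deterministic) envelope strategy satisfies $\lim_{t\to\infty}\ell(\hat y_t,y_t)=0$.
   Context: $\mathcal{H}_L$ is the set of functions $h:[-1,1]^d\to[0,1]$ with $|h(x)-h(x')|\le L\|x-x'\|_\infty$. Envelope strategy: at round $t$, with past data $(x_s,y_s)_{s<t}$, define $\underline h_t(x)=\max\{0,\max_{s<t}(y_s-L\|x-x_s\|_\infty)\}$ and $\overline h_t(x)=\min\{1,\min_{s<t}(y_s+L\|x-x_s\|_\infty)\}$ (with $\max_{\emptyset}=-\infty$, $\min_\emptyset=+\infty$), and predict $\hat y_t=\frac12(\underline h_t(x_t)+\overline h_t(x_t))$. *)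

theory Defs
  imports "HOL-Analysis.Analysis"
begin

text \<open>Sup-norm distance on R^d (d = CARD('d) \<ge> 1, since types are nonempty).\<close>
definition linf_dist :: "real^'d \<Rightarrow> real^'d \<Rightarrow> real" where
  "linf_dist x x' = Max (range (\<lambda>i. \<bar>x $ i - x' $ i\<bar>))"

definition cube :: "(real^'d) set" where
  "cube = {x. \<forall>i. -1 \<le> x $ i \<and> x $ i \<le> 1}"

definition lip_class :: "real \<Rightarrow> (real^'d \<Rightarrow> real) set" where
  "lip_class L = {h. (\<forall>x\<in>cube. 0 \<le> h x \<and> h x \<le> 1) \<and>
      (\<forall>x\<in>cube. \<forall>x'\<in>cube. \<bar>h x - h x'\<bar> \<le> L * linf_dist x x')}"

text \<open>Lower and upper envelopes at round t, built from the data (xs s, ys s) for s < t.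
  Rounds are indexed from 0; max over the empty set is -infinity, min is +infinity.\<close>
definition lower_env :: "real \<Rightarrow> (nat \<Rightarrow> real^'d) \<Rightarrow> (nat \<Rightarrow> real) \<Rightarrow> nat \<Rightarrow> real^'d \<Rightarrow> real" where
  "lower_env L xs ys t x =
     (if t = 0 then 0 else max 0 (Max ((\<lambda>s. ys s - L * linf_dist x (xs s)) ` {..<t})))"

definition upper_env :: "real \<Rightarrow> (nat \<Rightarrow> real^'d) \<Rightarrow> (nat \<Rightarrow> real) \<Rightarrow> nat \<Rightarrow> real^'d \<Rightarrow> real" where
  "upper_env L xs ys t x =
     (if t = 0 then 1 else min 1 (Min ((\<lambda>s. ys s + L * linf_dist x (xs s)) ` {..<t})))"

definition envelope_pred :: "real \<Rightarrow> (nat \<Rightarrow> real^'d) \<Rightarrow> (nat \<Rightarrow> real) \<Rightarrow> nat \<Rightarrow> real" where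
  "envelope_pred L xs ys t = (lower_env L xs ys t (xs t) + upper_env L xs ys t (xs t)) / 2"

end

theory Submission
  imports Defs
begin

text \<open>Every value the learner sees is a sample of \<open>f\<^sup>\<star>\<close>, so the Lipschitz
  property keeps \<open>f\<^sup>\<star>(x\<^sub>t)\<close> between the two envelopes, and any earlier
  point \<open>x\<^sub>s\<close> squeezes the envelopes into an interval of radius
  \<open>L \<parallel>x\<^sub>t - x\<^sub>s\<parallel>\<^sub>\<infinity>\<close> around \<open>f\<^sup>\<star>(x\<^sub>s)\<close>. Hence the
  midpoint prediction errs by at most \<open>L\<close> times the distance from \<open>x\<^sub>t\<close> to the
  nearest earlier point. Since the cube is compact, for every \<open>\<epsilon> > 0\<close> only finitely
  many points of the sequence are \<open>\<epsilon>\<close>-far from all their predecessors, so the error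
  tends to zero; uniform continuity of the loss on the compact square then transfers this
  to the loss, which vanishes on the diagonal.\<close>

lemma eventually_close_to_earlier_term:
  fixes x :: "nat \<Rightarrow> 'a::heine_borel"
  assumes "bounded (range x)" and "e > 0"
  shows "\<forall>\<^sub>F t in sequentially. \<exists>s<t. dist (x t) (x s) < e"
proof -
  define far where "far = {t. \<forall>s<t. e \<le> dist (x t) (x s)}"
  have "finite far"
  proof (rule ccontr)
    assume "infinite far"
    then obtain r :: "nat \<Rightarrow> nat" where r: "strict_mono r" "\<And>n. r n \<in> far"
      using infinite_enumerate by blast
    have "bounded (range (x \<circ> r))"
      by (rule bounded_subset[OF assms(1)]) (auto simp: image_subset_iff)
    then obtain l q where q: "strict_mono q" "(x \<circ> r \<circ> q) \<longlonglongrightarrow> l"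
      by (blast dest: bounded_imp_convergent_subsequence)
    then obtain N where N: "\<And>m n. N \<le> m \<Longrightarrow> N \<le> n \<Longrightarrow> dist ((x \<circ> r \<circ> q) m) ((x \<circ> r \<circ> q) n) < e"
      using LIMSEQ_imp_Cauchy[OF q(2)] \<open>e > 0\<close> unfolding Cauchy_def by blast
    have "r (q N) < r (q (Suc N))"
      using r(1) q(1) by (simp add: strict_mono_def)
    then have "e \<le> dist (x (r (q (Suc N)))) (x (r (q N)))"
      using r(2) unfolding far_def by blast
    with N[of "Suc N" N] show False by simp
  qed
  then obtain M where "\<forall>t\<in>far. t < M"
    unfolding finite_nat_set_iff_bounded by blast
  then have "t \<notin> far" if "M \<le> t" for t
    using that by auto
  then show ?thesis
    unfolding eventually_sequentially far_def by (auto simp: not_le)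
qed

lemma bounded_cube: "bounded (cube :: (real^'d) set)"
proof -
  have "cube \<subseteq> cbox (- 1) (1 :: real^'d)"
    unfolding cube_def by (auto simp: mem_box_cart)
  then show ?thesis
    using bounded_cbox bounded_subset by blast
qed

lemma linf_dist_le_dist: "linf_dist x y \<le> dist x y"
  unfolding linf_dist_def dist_norm
  using component_le_norm_cart[of "x - y"] by (auto intro: Max.boundedI)

lemma lip_class_range: "f \<in> lip_class L \<Longrightarrow> x \<in> cube \<Longrightarrow> 0 \<le> f x \<and> f x \<le> 1"
  unfolding lip_class_def by blast

lemma lip_class_lipschitz:
  "f \<in> lip_class L \<Longrightarrow> x \<in> cube \<Longrightarrow> x' \<in> cube \<Longrightarrow> \<bar>f x - f x'\<bar> \<le> L * linf_dist x x'"
  unfolding lip_class_def by blast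

lemma lower_env_nonneg: "0 \<le> lower_env L xs ys t x"
  unfolding lower_env_def by simp

lemma upper_env_le_one: "upper_env L xs ys t x \<le> 1"
  unfolding upper_env_def by simp

lemma lower_env_ge_sample: "s < t \<Longrightarrow> ys s - L * linf_dist x (xs s) \<le> lower_env L xs ys t x"
  unfolding lower_env_def by (auto simp: le_max_iff_disj intro!: Max_ge)

lemma upper_env_le_sample: "s < t \<Longrightarrow> upper_env L xs ys t x \<le> ys s + L * linf_dist x (xs s)"
  unfolding upper_env_def by (auto simp: min_le_iff_disj intro!: Min_le)

lemma lower_env_le_target:
  assumes "f \<in> lip_class L" and "\<forall>s. xs s \<in> cube" and "x \<in> cube"
  shows "lower_env L xs (\<lambda>s. f (xs s)) t x \<le> f x"
proof -
  have "f (xs s) - L * linf_dist x (xs s) \<le> f x" for s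
    using lip_class_lipschitz[OF assms(1,3), of "xs s"] assms(2) by auto
  then show ?thesis
    using lip_class_range[OF assms(1,3)] unfolding lower_env_def by (auto intro!: Max.boundedI)
qed

lemma target_le_upper_env:
  assumes "f \<in> lip_class L" and "\<forall>s. xs s \<in> cube" and "x \<in> cube"
  shows "f x \<le> upper_env L xs (\<lambda>s. f (xs s)) t x"
proof -
  have "f x \<le> f (xs s) + L * linf_dist x (xs s)" for s
    using lip_class_lipschitz[OF assms(1,3), of "xs s"] assms(2) by auto
  then show ?thesis
    using lip_class_range[OF assms(1,3)] unfolding upper_env_def by (auto intro!: Min.boundedI)
qed

lemma envelope_pred_in_unit:
  assumes "f \<in> lip_class L" and "\<forall>s. xs s \<in> cube"
  shows "envelope_pred L xs (\<lambda>s. f (xs s)) t \<in> {0..1}"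
proof -
  have "lower_env L xs (\<lambda>s. f (xs s)) t (xs t) \<le> upper_env L xs (\<lambda>s. f (xs s)) t (xs t)"
    using lower_env_le_target[OF assms] target_le_upper_env[OF assms] assms(2) by (meson order_trans)
  then show ?thesis
    using lower_env_nonneg[of L xs "\<lambda>s. f (xs s)" t "xs t"] upper_env_le_one[of L xs "\<lambda>s. f (xs s)" t "xs t"]
    unfolding envelope_pred_def by simp
qed

lemma abs_midpoint_sub_le:
  fixes a c l u y :: real
  assumes "a - c \<le> l" "u \<le> a + c" "l \<le> y" "y \<le> u"
  shows "\<bar>(l + u) / 2 - y\<bar> \<le> c"
proof -
  have "\<bar>l + u - 2 * y\<bar> \<le> 2 * c"
    using assms by (simp add: abs_le_iff)
  then show ?thesis
    by (simp add: abs_le_iff field_simps)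
qed

lemma envelope_pred_error_le:
  assumes "f \<in> lip_class L" and "\<forall>s. xs s \<in> cube" and "s < t"
  shows "dist (envelope_pred L xs (\<lambda>s. f (xs s)) t) (f (xs t)) \<le> L * linf_dist (xs t) (xs s)"
  unfolding envelope_pred_def dist_real_def
  using assms(2)
  by (intro abs_midpoint_sub_le[where a = "f (xs s)"] lower_env_ge_sample upper_env_le_sample
      lower_env_le_target[OF assms(1,2)] target_le_upper_env[OF assms(1,2)] \<open>s < t\<close>) auto

lemma envelope_pred_error_tendsto_zero:
  assumes "L > 0" and "f \<in> lip_class L" and "\<forall>s. xs s \<in> cube"
  shows "(\<lambda>t. dist (envelope_pred L xs (\<lambda>s. f (xs s)) t) (f (xs t))) \<longlonglongrightarrow> 0"
proof (rule tendstoI)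
  fix e :: real
  assume "e > 0"
  have "bounded (range xs)"
    using assms(3) by (blast intro: bounded_subset[OF bounded_cube])
  then have "\<forall>\<^sub>F t in sequentially. \<exists>s<t. dist (xs t) (xs s) < e / L"
    using \<open>e > 0\<close> \<open>L > 0\<close> by (intro eventually_close_to_earlier_term) auto
  then show "\<forall>\<^sub>F t in sequentially. dist (dist (envelope_pred L xs (\<lambda>s. f (xs s)) t) (f (xs t))) 0 < e"
  proof eventually_elim
    case (elim t)
    then obtain s where "s < t" and "L * dist (xs t) (xs s) < e"
      using \<open>L > 0\<close> by (auto simp: pos_less_divide_eq mult.commute)
    moreover have "L * linf_dist (xs t) (xs s) \<le> L * dist (xs t) (xs s)"
      using \<open>L > 0\<close> linf_dist_le_dist by simp
    ultimately show ?case
      using envelope_pred_error_le[OF assms(2,3)] by fastforce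
  qed
qed

lemma tendsto_zero_if_vanishing_on_diagonal:
  fixes loss :: "'a::metric_space \<Rightarrow> 'a \<Rightarrow> 'b::real_normed_vector"
  assumes "compact K" and "continuous_on (K \<times> K) (\<lambda>(a, b). loss a b)"
    and "\<forall>y\<in>K. loss y y = 0"
    and "\<forall>t. p t \<in> K" and "\<forall>t. q t \<in> K"
    and "(\<lambda>t. dist (p t) (q t)) \<longlonglongrightarrow> 0"
  shows "(\<lambda>t. loss (p t) (q t)) \<longlonglongrightarrow> 0"
proof (rule tendstoI)
  fix r :: real
  assume "r > 0"
  have "uniformly_continuous_on (K \<times> K) (\<lambda>(a, b). loss a b)"
    using assms(1,2) by (intro compact_uniformly_continuous compact_Times)
  then obtain d where "d > 0" and d: "\<And>u v. u \<in> K \<times> K \<Longrightarrow> v \<in> K \<times> K \<Longrightarrow> dist v u < d \<Longrightarrow>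
      dist ((\<lambda>(a, b). loss a b) v) ((\<lambda>(a, b). loss a b) u) < r"
    using \<open>r > 0\<close> unfolding uniformly_continuous_on_def by blast
  have "\<forall>\<^sub>F t in sequentially. dist (p t) (q t) < d"
    using tendstoD[OF assms(6) \<open>d > 0\<close>] by simp
  then show "\<forall>\<^sub>F t in sequentially. dist (loss (p t) (q t)) 0 < r"
  proof eventually_elim
    case (elim t)
    then have "dist (p t, q t) (q t, q t) < d"
      by (simp add: dist_Pair_Pair)
    then show ?case
      using d[of "(q t, q t)" "(p t, q t)"] assms(3-5) by auto
  qed
qed

theorem corollary1p4:
  fixes L :: real and loss :: "real \<Rightarrow> real \<Rightarrow> real"
    and xs :: "nat \<Rightarrow> real^'d" and fstar :: "real^'d \<Rightarrow> real"
  assumes "L \<ge> 1"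
    and "continuous_on ({0..1} \<times> {0..1}) (\<lambda>(a, b). loss a b)"
    and "\<forall>a\<in>{0..1}. \<forall>b\<in>{0..1}. loss a b \<ge> 0"
    and "\<forall>y\<in>{0..1}. loss y y = 0"
    and "\<forall>t. xs t \<in> cube"
    and "fstar \<in> lip_class L"
  shows "(\<lambda>t. loss (envelope_pred L xs (\<lambda>s. fstar (xs s)) t) (fstar (xs t))) \<longlonglongrightarrow> 0"
proof (rule tendsto_zero_if_vanishing_on_diagonal[OF compact_Icc assms(2,4)])
  show "\<forall>t. envelope_pred L xs (\<lambda>s. fstar (xs s)) t \<in> {0..1}"
    using envelope_pred_in_unit[OF assms(6,5)] by blast
  show "\<forall>t. fstar (xs t) \<in> {0..1}"
    using lip_class_range[OF assms(6)] assms(5) by auto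
  show "(\<lambda>t. dist (envelope_pred L xs (\<lambda>s. fstar (xs s)) t) (fstar (xs t))) \<longlonglongrightarrow> 0"
    using assms(1) by (intro envelope_pred_error_tendsto_zero assms(5,6)) auto
qed

end
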